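(* For every nonempty rooted tree $t$ with $|t|$ vertices, write $\Lambda(t)=\sum_{s=1}^{|t|}\omega_s(t)x^s$. Then $$\omega(t)=\sum_{s\ge1}\frac{(-1)^{s+1}}{s}\,\omega_s(t).$$
   Context: Let $k$ be a field of characteristic $0$. $\mathcal A=k[x]$ with the quasi-shuffle product $\diamond$ determined by $\mathbf 1\diamond u=u\diamond\mathbf 1=u$ and $x^k\diamond x^l=(x^{k-1}\diamond x^l)x+(x^k\diamond x^{l-1})x+(x^{k-1}\diamond x^{l-1})x$ ($k,l\ge1$). $\mathcal H_{CK}$ is the Connes–Kreimer Hopf algebra of rooted forests (free commutative algebra on nonempty non-planar rooted trees, unit the empty forest $\mathbf 1$, counit $\varepsilon$, coproduct by admissible cuts $\Delta_{CK}(u)=\sum v\otimes w$ over decompositions of the vertex set of $u$ into $V\sqcup W$ with no vertex of $V$ strictly below a vertex of $W$). $B_+$ grafts a forest onto a new root; $\Lambda:\mathcal H_{CK}\to\mathcal A$ is the unique unital algebra morphism with $\Lambda(B_+(t_1\cdots t_n))=(\Lambda(t_1)\diamond\cdots\diamond\Lambda(t_n))x$. $\delta$ is the character of $\mathcal H_{CK}$ with $\delta(\bullet)=1$ ($\bullet$ the one-vertex tree) and $\delta(t)=0$ for trees with at least two vertices, and $\omega=\log^*\delta=\sum_{n\ge1}\frac{(-1)^{n+1}}{n}(\delta-\varepsilon)^{*n}$ with $*$ the convolution of $\mathcal H_{CK}^*$. *)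

theory Defs
  imports "HOL-Library.Multiset" "HOL-Library.Sublist" "HOL-Computational_Algebra.Polynomial"
begin

fun qsh :: "nat \<Rightarrow> nat \<Rightarrow> 'a::comm_ring_1 poly" where
  "qsh 0 l = monom 1 l"
| "qsh (Suc k) 0 = monom 1 (Suc k)"
| "qsh (Suc k) (Suc l) = (qsh k (Suc l) + qsh (Suc k) l + qsh k l) * monom 1 1"

text \<open>Bilinear extension of the quasi-shuffle product on monomials.\<close>
definition qs :: "'a::comm_ring_1 poly \<Rightarrow> 'a poly \<Rightarrow> 'a poly" where
  "qs p q = (\<Sum>i\<le>degree p. \<Sum>j\<le>degree q. smult (coeff p i * coeff q j) (qsh i j))"

text \<open>Non-planar rooted trees (children form a multiset); forests are multisets of trees.\<close>
datatype tree = Node "tree multiset"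
type_synonym forest = "tree multiset"

definition bullet :: tree where "bullet = Node {#}"

text \<open>Planar representatives, used to give names (positions) to vertices.\<close>
datatype ptree = PNode "ptree list"

primrec np :: "ptree \<Rightarrow> tree" where
  "np (PNode ts) = Node (mset (map np ts))"

text \<open>Positions of vertices of a planar tree: the root is [], the j-th child's
  vertices are prefixed by j.\<close>
inductive ppos :: "ptree \<Rightarrow> nat list \<Rightarrow> bool" where
  "ppos t []"
| "i < length ts \<Longrightarrow> ppos (ts ! i) p \<Longrightarrow> ppos (PNode ts) (i # p)"

text \<open>Vertex set of a planar forest ts: positions i#p, p a vertex of the i-th tree.
  A vertex v is strictly below w iff v is a proper prefix of w.\<close>
definition fpos :: "ptree list \<Rightarrow> nat list set" where
  "fpos ts = {q. ppos (PNode ts) q \<and> q \<noteq> []}"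

text \<open>Induced subforest on a vertex set S: returns (tree to be attached to the parent, loose trees).\<close>
function ind :: "nat list \<Rightarrow> nat list set \<Rightarrow> ptree \<Rightarrow> forest \<times> forest" where
  "ind p S (PNode ts) =
     (let rs = map (\<lambda>i. ind (p @ [i]) S (ts ! i)) [0..<length ts];
          att = sum_list (map fst rs); loose = sum_list (map snd rs)
      in if p \<in> S then ({#Node att#}, loose) else ({#}, att + loose))"
  by pat_completeness auto
termination
  by (relation "measure (\<lambda>(p, S, t). size t)")
     (auto simp: less_Suc_eq_le intro!: size_list_estimation' nth_mem)

definition restr :: "ptree list \<Rightarrow> nat list set \<Rightarrow> forest" where
  "restr ts S = snd (ind [] (S - {[]}) (PNode ts))"

definition rep :: "forest \<Rightarrow> ptree list" where
  "rep F = (SOME ts. mset (map np ts) = F)"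

section \<open>Dual of H_CK: linear forms = functions on forests\<close>

text \<open>Admissible cuts: V \<sqinter> W = vertex set, no vertex of V strictly below a vertex of W;
  the term is (forest on V) \<otimes> (forest on W).\<close>
definition admissible :: "ptree list \<Rightarrow> nat list set \<Rightarrow> bool" where
  "admissible ts V \<longleftrightarrow> V \<subseteq> fpos ts \<and>
     (\<forall>v\<in>V. \<forall>w\<in>fpos ts - V. \<not> strict_prefix v w)"

definition conv :: "(forest \<Rightarrow> 'a::comm_ring_1) \<Rightarrow> (forest \<Rightarrow> 'a) \<Rightarrow> forest \<Rightarrow> 'a" where
  "conv f g F = (let ts = rep F in
      \<Sum>V \<in> {V. admissible ts V}. f (restr ts V) * g (restr ts (fpos ts - V)))"

definition eps :: "forest \<Rightarrow> 'a::comm_ring_1" where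
  "eps F = (if F = {#} then 1 else 0)"

primrec cpow :: "(forest \<Rightarrow> 'a::comm_ring_1) \<Rightarrow> nat \<Rightarrow> forest \<Rightarrow> 'a" where
  "cpow f 0 = eps"
| "cpow f (Suc n) = conv f (cpow f n)"

definition deltaT :: "tree \<Rightarrow> 'a::comm_ring_1" where
  "deltaT t = (if t = bullet then 1 else 0)"

definition delta :: "forest \<Rightarrow> 'a::comm_ring_1" where
  "delta F = prod_mset (image_mset deltaT F)"

text \<open>omega = log* delta, the series being pointwise finite (its value on F is the
  sum of the finitely many nonzero terms).\<close>
definition omega_term :: "nat \<Rightarrow> forest \<Rightarrow> 'a::field_char_0" where
  "omega_term n F = (-1) ^ (n + 1) / of_nat n * cpow (\<lambda>G. delta G - eps G) n F"

definition omega :: "forest \<Rightarrow> 'a::field_char_0" where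
  "omega F = (\<Sum>n \<in> {n. 1 \<le> n \<and> omega_term n F \<noteq> (0::'a)}. omega_term n F)"

primrec lamp :: "ptree \<Rightarrow> 'a::comm_ring_1 poly" where
  "lamp (PNode ts) = foldr qs (map lamp ts) 1 * monom 1 1"

definition Lambda :: "tree \<Rightarrow> 'a::comm_ring_1 poly" where
  "Lambda t = lamp (SOME p. np p = t)"

end

theory Submission
  imports Defs
begin

(*
  The theorem says that the coefficients of Lambda(t) are the values of the convolution
  powers of the infinitesimal character delta - eps:

      coeff (Lambda t) k = (delta - eps)^{*k} (t),                                  (coeff_Lambda)

  after which omega(t) = sum_k (-1)^(k+1)/k (delta - eps)^{*k}(t) is a finite sum over the
  coefficients of Lambda(t).  Both sides of (coeff_Lambda) are compared through the binomial
  transform  btrans u m = sum_k u k * (m choose k),  which is injective.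

  (1) Polynomial side.  Reading p in the binomial basis, beval p m = btrans (coeff p) m turns
      the quasi-shuffle product into the pointwise product and multiplication by x into the
      partial sum over n < m.  Hence beval (Lambda t) m = declab t m, the number of labellings
      of the vertices of t by {0..<m} that strictly decrease from the root to the leaves.
  (2) Tree side.  As delta^{*m} = (eps + (delta - eps))^{*m}, the transform of
      k |-> (delta - eps)^{*k}(F) is delta^{*m}(F) = declabF F m.  This is proved by induction
      on m from two facts: convolving with delta - eps only cuts off nonempty sets of leaves
      (conv_deltaR), and summing the labelling counts with labels < m over all ways of removing
      a set of leaves gives the count with labels < m + 1 (leaf_removal_forest/_tree).
*)

section \<open>The binomial transform\<close>

text \<open>The binomial transform of a sequence; it is triangular with unit diagonal, hence injective.\<close>
definition btrans :: "(nat \<Rightarrow> 'a::comm_ring_1) \<Rightarrow> nat \<Rightarrow> 'a" where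
  "btrans u m = (\<Sum>k\<le>m. u k * of_nat (m choose k))"

text \<open>Terms with index k > m vanish, so the summation range may be enlarged.\<close>
lemma btrans_upto: "m \<le> N \<Longrightarrow> btrans u m = (\<Sum>k\<le>N. u k * of_nat (m choose k))"
  unfolding btrans_def by (rule sum.mono_neutral_left) (simp_all add: binomial_eq_0)

lemma btrans_0: "btrans u 0 = u 0"
  by (simp add: btrans_def)

text \<open>Pascal's rule for the transform: the step m \<rightarrow> m + 1 adds the transform of the shift.\<close>
lemma btrans_Suc: "btrans u (Suc m) = btrans u m + btrans (\<lambda>k. u (Suc k)) m"
proof -
  have "btrans u (Suc m) = u 0 + (\<Sum>k\<le>m. u (Suc k) * of_nat (Suc m choose Suc k))"
    unfolding btrans_def by (subst sum.atMost_Suc_shift) simp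
  also have "\<dots> = (u 0 + (\<Sum>k\<le>m. u (Suc k) * of_nat (m choose Suc k))) + btrans (\<lambda>k. u (Suc k)) m"
    by (simp add: btrans_def sum.distrib algebra_simps)
  also have "u 0 + (\<Sum>k\<le>m. u (Suc k) * of_nat (m choose Suc k)) = (\<Sum>k\<le>Suc m. u k * of_nat (m choose k))"
    by (subst sum.atMost_Suc_shift) simp
  also have "\<dots> = btrans u m"
    by (rule btrans_upto[symmetric]) simp
  finally show ?thesis .
qed

lemma btrans_sum: "finite I \<Longrightarrow> btrans (\<lambda>k. \<Sum>i\<in>I. f i k) m = (\<Sum>i\<in>I. btrans (f i) m)"
  by (induction I rule: finite_induct) (auto simp: btrans_def sum.distrib distrib_right)

lemma btrans_inj:
  assumes "\<And>m. btrans u m = btrans v m"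
  shows "u k = v k"
proof (induction k rule: less_induct)
  case (less k)
  have split: "btrans w k = (\<Sum>j<k. w j * of_nat (k choose j)) + w k" for w :: "nat \<Rightarrow> 'a"
    unfolding btrans_def by (simp add: lessThan_Suc_atMost[symmetric])
  have "(\<Sum>j<k. u j * of_nat (k choose j)) = (\<Sum>j<k. v j * of_nat (k choose j))"
    using less by (intro sum.cong) auto
  then show ?case
    using assms[of k] split[of u] split[of v] by simp
qed

section \<open>Polynomials in the binomial basis\<close>

text \<open>Value of a polynomial read in the binomial basis: x^k is sent to m choose k.\<close>
definition beval :: "'a::comm_ring_1 poly \<Rightarrow> nat \<Rightarrow> 'a" where
  "beval p = btrans (coeff p)"

lemma beval_add: "beval (p + q) m = beval p m + beval q m"
  by (simp add: beval_def btrans_def algebra_simps sum.distrib)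

lemma beval_smult: "beval (smult c p) m = c * beval p m"
  by (simp add: beval_def btrans_def sum_distrib_left algebra_simps)

lemma beval_sum: "finite I \<Longrightarrow> beval (\<Sum>i\<in>I. f i) m = (\<Sum>i\<in>I. beval (f i) m)"
  by (induction I rule: finite_induct) (auto simp: beval_def btrans_def sum.distrib distrib_right)

lemma beval_degree_bound:
  assumes "degree p \<le> N"
  shows "beval p m = (\<Sum>k\<le>N. coeff p k * of_nat (m choose k))"
proof -
  have "beval p m = (\<Sum>k\<le>max m N. coeff p k * of_nat (m choose k))"
    unfolding beval_def by (rule btrans_upto) simp
  also have "\<dots> = (\<Sum>k\<le>N. coeff p k * of_nat (m choose k))"
    using assms by (intro sum.mono_neutral_right) (auto simp: coeff_eq_0)
  finally show ?thesis .
qed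

lemma beval_monom: "beval (monom 1 l) m = of_nat (m choose l)"
proof -
  have "beval (monom 1 l) m = (\<Sum>k\<le>l. coeff (monom 1 l) k * of_nat (m choose k))"
    by (rule beval_degree_bound) (simp add: degree_monom_le)
  also have "\<dots> = of_nat (m choose l)"
    by (subst sum.remove[of _ l]) (auto simp: coeff_monom)
  finally show ?thesis .
qed

lemma beval_1: "beval 1 m = 1"
  using beval_monom[of 0 m] by (simp add: monom_eq_1)

lemma beval_times_x: "beval (p * monom 1 1) m = (\<Sum>n<m. beval p n)"
  by (induction m) (simp_all add: beval_def btrans_0 btrans_Suc mult.commute[of p] coeff_monom_mult)

text \<open>The binomial identity behind the quasi-shuffle recursion.\<close>
lemma choose_product_telescope:
  "(\<Sum>n<m. (n choose k) * (n choose Suc l) + (n choose Suc k) * (n choose l) + (n choose k) * (n choose l))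
   = (m choose Suc k) * (m choose Suc l)"
  by (induction m) (simp_all add: algebra_simps)

lemma beval_qsh: "beval (qsh i j :: 'a::comm_ring_1 poly) m = of_nat (m choose i) * of_nat (m choose j)"
proof (induction i j arbitrary: m rule: qsh.induct)
  case (1 l) then show ?case by (simp add: beval_monom)
next
  case (2 k) then show ?case by (simp add: beval_monom)
next
  case (3 k l)
  have "beval (qsh (Suc k) (Suc l) :: 'a poly) m
      = (\<Sum>n<m. beval (qsh k (Suc l) + qsh (Suc k) l + qsh k l :: 'a poly) n)"
    by (simp only: qsh.simps beval_times_x)
  also have "\<dots> = (\<Sum>n<m. of_nat ((n choose k) * (n choose Suc l) + (n choose Suc k) * (n choose l)
                                     + (n choose k) * (n choose l)))"
    by (simp add: beval_add 3)
  also have "\<dots> = of_nat (m choose Suc k) * of_nat (m choose Suc l)"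
    by (simp only: of_nat_sum[symmetric] choose_product_telescope of_nat_mult)
  finally show ?case .
qed

lemma beval_qs: "beval (qs p q) m = beval p m * beval (q :: 'a::comm_ring_1 poly) m"
proof -
  have "beval (qs p q) m = (\<Sum>i\<le>degree p. \<Sum>j\<le>degree q.
          coeff p i * coeff q j * (of_nat (m choose i) * of_nat (m choose j)))"
    by (simp add: qs_def beval_sum beval_smult beval_qsh)
  also have "\<dots> = (\<Sum>i\<le>degree p. coeff p i * of_nat (m choose i)) * (\<Sum>j\<le>degree q. coeff q j * of_nat (m choose j))"
    by (simp add: sum_product algebra_simps)
  also have "\<dots> = beval p m * beval q m"
    by (simp only: beval_degree_bound[OF order_refl])
  finally show ?thesis .
qed

lemma beval_foldr_qs: "beval (foldr qs ps 1) m = prod_list (map (\<lambda>p. beval p m) (ps :: 'a::comm_ring_1 poly list))"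
  by (induction ps) (simp_all add: beval_1 beval_qs)

section \<open>Decreasing labellings\<close>

text \<open>declab t m counts the labellings of the vertices of t by {0..<m} that strictly decrease
  from the root towards the leaves: the root gets some r < m, its subtrees labels < r.\<close>
primrec declab :: "tree \<Rightarrow> nat \<Rightarrow> 'a::comm_ring_1" where
  "declab (Node M) = (\<lambda>m. \<Sum>r<m. prod_mset (image_mset (\<lambda>t. declab t r) M))"

definition declabF :: "forest \<Rightarrow> nat \<Rightarrow> 'a::comm_ring_1" where
  "declabF F m = prod_mset (image_mset (\<lambda>t. declab t m) F)"

lemma declab_Node: "declab (Node M) m = (\<Sum>r<m. declabF M r)"
  by (simp add: declabF_def)

lemma declabF_plus: "declabF (F + G) m = declabF F m * declabF G m"
  by (simp add: declabF_def)

lemma declabF_single: "declabF {#t#} m = declab t m"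
  by (simp add: declabF_def)

lemma declabF_empty: "declabF {#} m = 1"
  by (simp add: declabF_def)

lemma declab_0: "declab t 0 = 0"
  by (cases t) simp

lemma declabF_0: "F \<noteq> {#} \<Longrightarrow> declabF F 0 = 0"
  by (cases F) (auto simp: declabF_def declab_0)

lemma beval_lamp: "beval (lamp p :: 'a::comm_ring_1 poly) m = declab (np p) m"
proof (induction p arbitrary: m)
  case (PNode ts)
  have "beval (lamp (PNode ts) :: 'a poly) m = (\<Sum>n<m. prod_list (map (\<lambda>t. beval (lamp t :: 'a poly) n) ts))"
    by (simp only: lamp.simps beval_times_x beval_foldr_qs map_map o_def)
  also have "\<dots> = (\<Sum>n<m. prod_list (map (\<lambda>t. declab (np t) n) ts))"
    using PNode by (intro sum.cong refl arg_cong[where f=prod_list] map_cong) auto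
  also have "\<dots> = declab (np (PNode ts)) m"
    by (simp add: prod_mset_prod_list[symmetric] image_mset.compositionality o_def)
  finally show ?case .
qed

lemma np_surj: "\<exists>p. np p = t"
proof (induction t)
  case (Node M)
  obtain xs where xs: "mset xs = M" using ex_mset by blast
  have "map np (map (\<lambda>x. SOME p. np p = x) xs) = xs"
    unfolding map_map by (rule map_idI) (use Node xs in \<open>auto intro: someI_ex\<close>)
  then have "np (PNode (map (\<lambda>x. SOME p. np p = x) xs)) = Node M"
    using xs by simp
  then show ?case by blast
qed

lemma np_some: "np (SOME p. np p = t) = t"
  using np_surj by (rule someI_ex)

lemma rep_mset: "mset (map np (rep F)) = F"
proof -
  obtain xs where xs: "mset xs = F" using ex_mset by blast
  have "map np (map (\<lambda>x. SOME p. np p = x) xs) = xs"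
    unfolding map_map by (rule map_idI) (simp add: np_some)
  then have "\<exists>ts. mset (map np ts) = F" using xs by metis
  then show ?thesis unfolding rep_def by (rule someI_ex)
qed

lemma sum_list_singletons_nth: "sum_list (map (\<lambda>i. {#np (ts ! i)#}) [0..<length ts]) = mset (map np ts)"
proof -
  have "map (\<lambda>i. {#np (ts ! i)#}) [0..<length ts] = map (\<lambda>t. {#np t#}) ts"
    by (rule nth_equalityI) auto
  then show ?thesis by (simp only: sum_list_singleton_mset mset_map)
qed

lemma ppos_Nil [simp]: "ppos t []"
  by (rule ppos.intros)

lemma ppos_Cons [simp]: "ppos (PNode ts) (i # q) \<longleftrightarrow> i < length ts \<and> ppos (ts ! i) q"
  by (auto intro: ppos.intros elim: ppos.cases)

lemma ppos_leaf: "ppos (PNode []) q \<longleftrightarrow> q = []"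
  by (cases q) auto

lemma ppos_snoc: "ppos t (q @ [i]) \<Longrightarrow> ppos t (q @ [0]) \<and> ppos t q"
proof (induction q arbitrary: t)
  case Nil then show ?case by (cases t) auto
next
  case (Cons a q) then show ?case by (cases t) auto
qed

lemma ppos_prefix_child: "ppos t (q @ k # r) \<Longrightarrow> ppos t (q @ [k])"
proof (induction q arbitrary: t)
  case Nil then show ?case by (cases t) auto
next
  case (Cons a q)
  obtain ts where t: "t = PNode ts" by (cases t)
  then have "a < length ts" "ppos (ts ! a) (q @ k # r)" using Cons.prems by auto
  then show ?case using Cons.IH[of "ts ! a"] t by simp
qed

definition posT :: "ptree \<Rightarrow> nat list set" where
  "posT t = {q. ppos t q}"

lemma posT_PNode: "posT (PNode ts) = insert [] (\<Union>i<length ts. (Cons i) ` posT (ts ! i))"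
  unfolding posT_def
proof (intro set_eqI iffI)
  fix q assume "q \<in> {q. ppos (PNode ts) q}"
  then show "q \<in> insert [] (\<Union>i<length ts. (Cons i) ` {q. ppos (ts ! i) q})"
    by (cases q) auto
qed auto

lemma finite_posT: "finite (posT t)"
  by (induction t) (simp add: posT_PNode)

lemma finite_fpos: "finite (fpos ts)"
  by (rule finite_subset[OF _ finite_posT[of "PNode ts"]]) (auto simp: fpos_def posT_def)

definition leavesT :: "ptree \<Rightarrow> nat list set" where
  "leavesT t = {q. ppos t q \<and> \<not> ppos t (q @ [0])}"

definition leaves :: "ptree list \<Rightarrow> nat list set" where
  "leaves ts = leavesT (PNode ts) - {[]}"

lemma finite_leavesT: "finite (leavesT t)"
  by (rule finite_subset[OF _ finite_posT[of t]]) (auto simp: leavesT_def posT_def)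

lemma finite_leaves: "finite (leaves ts)"
  using finite_leavesT by (simp add: leaves_def)

text \<open>Shifting the first index: the positions of the forest cs inside the forest c # cs.\<close>
definition shift :: "nat list \<Rightarrow> nat list" where
  "shift q = (case q of [] \<Rightarrow> [] | i # r \<Rightarrow> Suc i # r)"

lemma shift_simps [simp]: "shift [] = []" "shift (i # r) = Suc i # r"
  by (simp_all add: shift_def)

lemma inj_shift: "inj shift"
proof (rule injI)
  fix x y assume "shift x = shift y" then show "x = y"
    by (cases x; cases y) auto
qed

lemma shift_ne_Cons0: "shift y \<noteq> 0 # q"
  by (cases y) auto

lemma Cons0_notin_shift: "0 # q \<notin> shift ` Z"
  using shift_ne_Cons0 by (metis imageE)

lemma shift_notin_Cons0: "shift q \<notin> (Cons 0) ` Z"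
  using shift_ne_Cons0 by (metis imageE)

lemma fpos_Cons: "fpos (c # cs) = (Cons 0) ` posT c \<union> shift ` fpos cs"
proof (intro set_eqI iffI)
  fix q assume "q \<in> fpos (c # cs)"
  then obtain i r where q: "q = i # r" "ppos ((c # cs) ! i) r" "i < Suc (length cs)"
    by (cases q) (auto simp: fpos_def)
  then show "q \<in> (Cons 0) ` posT c \<union> shift ` fpos cs"
    by (cases i) (auto simp: posT_def fpos_def intro!: image_eqI[where x="_ # r"])
next
  fix q assume "q \<in> (Cons 0) ` posT c \<union> shift ` fpos cs"
  then show "q \<in> fpos (c # cs)"
    by (auto simp: fpos_def posT_def shift_def split: list.splits)
qed

lemma leaves_Cons: "leaves (c # cs) = (Cons 0) ` leavesT c \<union> shift ` leaves cs"
proof (intro set_eqI iffI)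
  fix q assume "q \<in> leaves (c # cs)"
  then obtain i r where q: "q = i # r" "ppos ((c # cs) ! i) r" "\<not> ppos ((c # cs) ! i) (r @ [0])"
      "i < Suc (length cs)"
    by (cases q) (auto simp: leaves_def leavesT_def)
  then show "q \<in> (Cons 0) ` leavesT c \<union> shift ` leaves cs"
    by (cases i) (auto simp: leaves_def leavesT_def intro!: image_eqI[where x="_ # r"])
next
  fix q assume "q \<in> (Cons 0) ` leavesT c \<union> shift ` leaves cs"
  then show "q \<in> leaves (c # cs)"
    by (auto simp: leaves_def leavesT_def shift_def split: list.splits)
qed

lemma leaves_Cons_disjoint: "(Cons 0) ` leavesT c \<inter> shift ` leaves cs = {}"
  using shift_notin_Cons0 by (metis disjoint_iff imageE)

text \<open>Every set of leaves is an admissible cut: a leaf lies strictly below no vertex.\<close>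
lemma admissible_leaves:
  assumes V: "V \<subseteq> leaves ts"
  shows "admissible ts V"
  unfolding admissible_def
proof (intro conjI ballI)
  show "V \<subseteq> fpos ts" using V by (auto simp: leaves_def leavesT_def fpos_def)
  fix v w assume v: "v \<in> V" and w: "w \<in> fpos ts - V"
  show "\<not> strict_prefix v w"
  proof
    assume "strict_prefix v w"
    then obtain k r where "w = v @ k # r"
      by (metis append_Nil2 neq_Nil_conv prefix_def strict_prefix_def)
    then have "ppos (PNode ts) (v @ [k])"
      using w ppos_prefix_child by (auto simp: fpos_def)
    then have "ppos (PNode ts) (v @ [0])"
      using ppos_snoc by blast
    then show False using v V by (auto simp: leaves_def leavesT_def)
  qed
qed

section \<open>Induced subforests\<close>

definition indF :: "nat list \<Rightarrow> nat list set \<Rightarrow> ptree \<Rightarrow> forest" where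
  "indF p S t = fst (ind p S t) + snd (ind p S t)"

definition ind_att :: "nat list \<Rightarrow> nat list set \<Rightarrow> ptree list \<Rightarrow> forest" where
  "ind_att p S ts = sum_list (map (\<lambda>i. fst (ind (p @ [i]) S (ts ! i))) [0..<length ts])"

definition ind_loose :: "nat list \<Rightarrow> nat list set \<Rightarrow> ptree list \<Rightarrow> forest" where
  "ind_loose p S ts = sum_list (map (\<lambda>i. snd (ind (p @ [i]) S (ts ! i))) [0..<length ts])"

lemma ind_PNode:
  "ind p S (PNode ts) = (if p \<in> S then ({#Node (ind_att p S ts)#}, ind_loose p S ts)
                         else ({#}, ind_att p S ts + ind_loose p S ts))"
  unfolding ind.simps Let_def ind_att_def ind_loose_def by (simp only: map_map o_def)

declare ind.simps [simp del]

lemma ind_att_loose: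
  "ind_att p S ts + ind_loose p S ts = sum_list (map (\<lambda>i. indF (p @ [i]) S (ts ! i)) [0..<length ts])"
  unfolding ind_att_def ind_loose_def indF_def by (simp only: sum_list_addf)

lemma indF_PNode:
  "indF p S (PNode ts) = (if p \<in> S then {#Node (ind_att p S ts)#} + ind_loose p S ts
                         else ind_att p S ts + ind_loose p S ts)"
  by (simp add: indF_def ind_PNode)

lemma fst_ind_empty: "fst (ind p S t) = {#} \<longleftrightarrow> p \<notin> S"
  by (cases t) (simp add: ind_PNode)

lemma sum_list_mset_eq_empty_iff [simp]:
  "sum_list (xs :: 'a multiset list) = {#} \<longleftrightarrow> (\<forall>X\<in>set xs. X = {#})"
  by (induction xs) auto

lemma ind_shift: "(\<And>q. p @ q \<in> S \<longleftrightarrow> p' @ q \<in> S') \<Longrightarrow> ind p S t = ind p' S' t"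
proof (induction p S t arbitrary: p' S' rule: ind.induct)
  case (1 p S ts)
  have "p \<in> S \<longleftrightarrow> p' \<in> S'" using "1.prems"[of "[]"] by simp
  moreover have "map (\<lambda>i. ind (p @ [i]) S (ts ! i)) [0..<length ts] =
                 map (\<lambda>i. ind (p' @ [i]) S' (ts ! i)) [0..<length ts]"
    by (intro map_cong refl "1.IH") (use "1.prems" in auto)
  ultimately show ?case by (simp only: ind.simps Let_def)
qed

lemma indF_shift: "(\<And>q. p @ q \<in> S \<longleftrightarrow> p' @ q \<in> S') \<Longrightarrow> indF p S t = indF p' S' t"
  unfolding indF_def using ind_shift by metis

lemma ind_empty: "(\<And>q. ppos t q \<Longrightarrow> p @ q \<notin> S) \<Longrightarrow> ind p S t = ({#}, {#})"
proof (induction p S t rule: ind.induct)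
  case (1 p S ts)
  have "ind (p @ [i]) S (ts ! i) = ({#}, {#})" if "i < length ts" for i
    using that "1.prems"[of "i # _"] by (intro "1.IH") auto
  then have "ind_att p S ts = {#}" "ind_loose p S ts = {#}"
    unfolding ind_att_def ind_loose_def by auto
  moreover have "p \<notin> S" using "1.prems"[of "[]"] by simp
  ultimately show ?case by (simp add: ind_PNode)
qed

lemma ind_full: "(\<And>q. ppos t q \<Longrightarrow> p @ q \<in> S) \<Longrightarrow> ind p S t = ({#np t#}, {#})"
proof (induction p S t rule: ind.induct)
  case (1 p S ts)
  have ch: "ind (p @ [i]) S (ts ! i) = ({#np (ts ! i)#}, {#})" if "i < length ts" for i
    using that "1.prems"[of "i # _"] by (intro "1.IH") auto
  have "ind_att p S ts = sum_list (map (\<lambda>i. {#np (ts ! i)#}) [0..<length ts])"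
    unfolding ind_att_def by (intro arg_cong[where f=sum_list] map_cong) (auto simp: ch)
  also have "\<dots> = mset (map np ts)"
    by (rule sum_list_singletons_nth)
  finally have "ind_att p S ts = mset (map np ts)" .
  moreover have "ind_loose p S ts = {#}"
    unfolding ind_loose_def by (auto simp: ch)
  moreover have "p \<in> S" using "1.prems"[of "[]"] by simp
  ultimately show ?case by (simp add: ind_PNode)
qed

lemma ind_no_loose: "(\<And>q i. ppos t (q @ [i]) \<Longrightarrow> p @ q \<in> S) \<Longrightarrow> snd (ind p S t) = {#}"
proof (induction p S t rule: ind.induct)
  case (1 p S ts)
  have "snd (ind (p @ [x]) S (ts ! x)) = {#}" if "x < length ts" for x
    using that "1.prems"[of "x # _"] by (intro "1.IH") auto
  then have lo0: "ind_loose p S ts = {#}"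
    unfolding ind_loose_def by auto
  show ?case
  proof (cases "p \<in> S")
    case True then show ?thesis by (simp add: ind_PNode lo0)
  next
    case False
    then have "ts = []" using "1.prems"[of "[]" 0] by (cases ts) auto
    then show ?thesis by (simp add: ind_PNode ind_att_def ind_loose_def)
  qed
qed

lemma indF_nonempty: "ppos t q \<Longrightarrow> p @ q \<in> S \<Longrightarrow> indF p S t \<noteq> {#}"
proof (induction p S t arbitrary: q rule: ind.induct)
  case (1 p S ts)
  show ?case
  proof (cases "p \<in> S")
    case True then show ?thesis by (simp add: indF_PNode)
  next
    case False
    then obtain j q' where q: "q = j # q'" using "1.prems" by (cases q) auto
    then have j: "j < length ts" "ppos (ts ! j) q'" using "1.prems" by auto
    have "indF (p @ [j]) S (ts ! j) \<noteq> {#}"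
      using "1.IH"[of j q'] j "1.prems" q by simp
    then show ?thesis
      using False j by (auto simp: indF_PNode ind_att_loose)
  qed
qed

lemma indF_bullets:
  "(\<And>q i. ppos t (q @ [i]) \<Longrightarrow> p @ q \<in> S \<Longrightarrow> p @ q @ [i] \<notin> S) \<Longrightarrow> x \<in># indF p S t \<Longrightarrow> x = bullet"
proof (induction p S t arbitrary: x rule: ind.induct)
  case (1 p S ts)
  have ch: "y = bullet" if "i < length ts" "y \<in># indF (p @ [i]) S (ts ! i)" for i y
    using that "1.prems"(1)[of "i # _"] by (intro "1.IH"[of i]) auto
  show ?case
  proof (cases "p \<in> S")
    case True
    have "p @ [i] \<notin> S" if "i < length ts" for i
      using "1.prems"(1)[of "[]" i] True that by simp
    then have "ind_att p S ts = {#}"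
      unfolding ind_att_def by (auto simp: fst_ind_empty)
    moreover have "x \<in># {#Node (ind_att p S ts)#} + ind_loose p S ts"
      using True "1.prems"(2) by (simp add: indF_PNode)
    ultimately show ?thesis using ch
      by (auto simp: bullet_def ind_loose_def indF_def)
  next
    case False
    then show ?thesis using "1.prems"(2) ch by (auto simp: indF_PNode ind_att_loose)
  qed
qed

lemma indF_nonbullet:
  "ppos t (q @ [i]) \<Longrightarrow> p @ q \<in> S \<Longrightarrow> p @ q @ [i] \<in> S \<Longrightarrow> \<exists>x\<in>#indF p S t. x \<noteq> bullet"
proof (induction p S t arbitrary: q rule: ind.induct)
  case (1 p S ts)
  show ?case
  proof (cases q)
    case Nil
    then have i: "i < length ts" "p \<in> S" "p @ [i] \<in> S" using "1.prems" by auto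
    then have "fst (ind (p @ [i]) S (ts ! i)) \<noteq> {#}" by (simp add: fst_ind_empty)
    then have "ind_att p S ts \<noteq> {#}" using i unfolding ind_att_def by auto
    then show ?thesis using i by (auto simp: indF_PNode bullet_def)
  next
    case (Cons j q')
    then have j: "j < length ts" "ppos (ts ! j) (q' @ [i])" using "1.prems" by auto
    obtain x where x: "x \<in># indF (p @ [j]) S (ts ! j)" "x \<noteq> bullet"
      using "1.IH"[of j q'] j "1.prems" Cons by auto
    show ?thesis
    proof (cases "p \<in> S")
      case False
      then show ?thesis using x j by (auto simp: indF_PNode ind_att_loose)
    next
      case True
      show ?thesis
      proof (cases "x \<in># snd (ind (p @ [j]) S (ts ! j))")
        case True
        then have "x \<in># ind_loose p S ts" using j unfolding ind_loose_def by auto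
        then show ?thesis using x \<open>p \<in> S\<close> by (auto simp: indF_PNode)
      next
        case False
        then have "x \<in># fst (ind (p @ [j]) S (ts ! j))" using x by (simp add: indF_def)
        then have "x \<in># ind_att p S ts" using j unfolding ind_att_def by auto
        then have "ind_att p S ts \<noteq> {#}" by auto
        then show ?thesis using \<open>p \<in> S\<close> by (auto simp: indF_PNode bullet_def)
      qed
    qed
  qed
qed

lemma restr_unfold: "restr ts S = sum_list (map (\<lambda>i. indF [i] S (ts ! i)) [0..<length ts])"
proof -
  have "restr ts S = sum_list (map (\<lambda>i. indF [i] (S - {[]}) (ts ! i)) [0..<length ts])"
    unfolding restr_def by (simp add: ind_PNode ind_att_loose)
  also have "map (\<lambda>i. indF [i] (S - {[]}) (ts ! i)) [0..<length ts] = map (\<lambda>i. indF [i] S (ts ! i)) [0..<length ts]"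
    by (intro map_cong refl indF_shift) auto
  finally show ?thesis .
qed

lemma mem_restr: "x \<in># restr ts S \<longleftrightarrow> (\<exists>i<length ts. x \<in># indF [i] S (ts ! i))"
  by (auto simp: restr_unfold)

lemma restr_Cons: "restr (c # cs) S = indF [0] S c + restr cs {q. shift q \<in> S}"
proof -
  have "[0..<length (c # cs)] = 0 # map Suc [0..<length cs]"
    by (simp add: upt_conv_Cons map_Suc_upt del: upt_Suc)
  then have "restr (c # cs) S = indF [0] S c + sum_list (map (\<lambda>i. indF [Suc i] S (cs ! i)) [0..<length cs])"
    by (simp add: restr_unfold o_def)
  also have "map (\<lambda>i. indF [Suc i] S (cs ! i)) [0..<length cs] = map (\<lambda>i. indF [i] {q. shift q \<in> S} (cs ! i)) [0..<length cs]"
    by (intro map_cong refl indF_shift) auto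
  finally show ?thesis by (simp add: restr_unfold)
qed

lemma restr_full: "restr ts (fpos ts) = mset (map np ts)"
proof -
  have "indF [i] (fpos ts) (ts ! i) = {#np (ts ! i)#}" if "i < length ts" for i
    using that ind_full[of "ts ! i" "[i]" "fpos ts"] by (simp add: indF_def fpos_def)
  then have "restr ts (fpos ts) = sum_list (map (\<lambda>i. {#np (ts ! i)#}) [0..<length ts])"
    unfolding restr_unfold by (intro arg_cong[where f=sum_list] map_cong) auto
  also have "\<dots> = mset (map np ts)"
    by (rule sum_list_singletons_nth)
  finally show ?thesis .
qed

lemma restr_emptyset: "restr ts {} = {#}"
  by (simp add: restr_unfold indF_def ind_empty)

lemma restr_Cons_cut:
  "restr (c # cs) (fpos (c # cs) - ((Cons 0) ` X \<union> shift ` Y)) = indF [] (posT c - X) c + restr cs (fpos cs - Y)"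
proof -
  let ?S = "fpos (c # cs) - ((Cons 0) ` X \<union> shift ` Y)"
  have "indF [0] ?S c = indF [] (posT c - X) c"
    by (rule indF_shift) (auto simp: fpos_Cons Cons0_notin_shift)
  moreover have "{q. shift q \<in> ?S} = fpos cs - Y"
    using inj_shift by (auto simp: fpos_Cons shift_notin_Cons0 inj_image_mem_iff)
  ultimately show ?thesis by (simp only: restr_Cons)
qed

lemma indF_cut_leaves:
  assumes W: "W \<subseteq> leaves cs"
  shows "indF [] (posT (PNode cs) - W) (PNode cs) = {#Node (restr cs (fpos cs - W))#}"
proof -
  let ?S = "posT (PNode cs) - W"
  have root: "[] \<in> ?S" using W by (auto simp: posT_def leaves_def)
  have "snd (ind [] ?S (PNode cs)) = {#}"
  proof (rule ind_no_loose)
    fix q i assume "ppos (PNode cs) (q @ [i])"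
    then have "ppos (PNode cs) q" "ppos (PNode cs) (q @ [0])" using ppos_snoc by auto
    then show "[] @ q \<in> ?S" using W by (auto simp: posT_def leaves_def leavesT_def)
  qed
  then have "ind_loose [] ?S cs = {#}" using root by (simp add: ind_PNode)
  then have "ind_att [] ?S cs = sum_list (map (\<lambda>i. indF [i] ?S (cs ! i)) [0..<length cs])"
    using ind_att_loose[of "[]" ?S cs] by simp
  also have "\<dots> = restr cs (fpos cs - W)"
    unfolding restr_unfold by (intro arg_cong[where f=sum_list] map_cong refl indF_shift)
      (auto simp: posT_def fpos_def)
  finally show ?thesis
    using root \<open>ind_loose [] ?S cs = {#}\<close> by (simp add: indF_PNode)
qed

abbreviation deltaR :: "forest \<Rightarrow> 'a::comm_ring_1" where
  "deltaR \<equiv> (\<lambda>G. delta G - eps G)"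

lemma delta_bullets: "(\<And>x. x \<in># F \<Longrightarrow> x = bullet) \<Longrightarrow> delta F = 1"
  unfolding delta_def by (induction F) (auto simp: deltaT_def)

lemma delta_nonbullet: "x \<in># F \<Longrightarrow> x \<noteq> bullet \<Longrightarrow> delta F = 0"
  by (auto simp: delta_def deltaT_def dest!: multi_member_split)

lemma restr_nonempty:
  assumes "V \<subseteq> fpos ts" "V \<noteq> {}"
  shows "restr ts V \<noteq> {#}"
proof -
  obtain v where v: "v \<in> V" using assms(2) by blast
  then obtain i q where iq: "i # q \<in> V" "i < length ts" "ppos (ts ! i) q"
    using assms(1) by (cases v) (auto simp: fpos_def)
  then have "indF [i] V (ts ! i) \<noteq> {#}" using indF_nonempty[of "ts ! i" q "[i]" V] by simp
  then obtain x where "x \<in># indF [i] V (ts ! i)" by blast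
  then have "x \<in># restr ts V" using iq by (auto simp: mem_restr)
  then show ?thesis by auto
qed

lemma restr_leaves_bullets:
  assumes "V \<subseteq> leaves ts" "x \<in># restr ts V"
  shows "x = bullet"
proof -
  obtain j where j: "j < length ts" "x \<in># indF [j] V (ts ! j)"
    using assms(2) unfolding mem_restr by blast
  show ?thesis
  proof (rule indF_bullets[OF _ j(2)])
    fix r k assume "ppos (ts ! j) (r @ [k])" "[j] @ r \<in> V"
    then have "ppos (ts ! j) (r @ [0])" "j # r \<in> leaves ts" using ppos_snoc assms(1) by auto
    then show "[j] @ r @ [k] \<notin> V" using j by (auto simp: leaves_def leavesT_def)
  qed
qed

text \<open>An admissible cut containing an inner vertex contains its first child, hence an edge.\<close>
lemma restr_inner_vertex:
  assumes adm: "admissible ts V" and w: "w \<in> V" "w \<notin> leaves ts"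
  shows "\<exists>x\<in>#restr ts V. x \<noteq> bullet"
proof -
  have wf: "w \<in> fpos ts" using adm w by (auto simp: admissible_def)
  then have w0f: "w @ [0] \<in> fpos ts" using w by (auto simp: leaves_def leavesT_def fpos_def)
  have "strict_prefix w (w @ [0])" by (simp add: strict_prefix_def)
  then have w0: "w @ [0] \<in> V" using adm w0f w by (auto simp: admissible_def)
  obtain j r where jr: "w = j # r" "j < length ts"
    using wf by (cases w) (auto simp: fpos_def)
  have "ppos (ts ! j) (r @ [0])" using w0f jr by (auto simp: fpos_def)
  then obtain x where x: "x \<in># indF [j] V (ts ! j)" "x \<noteq> bullet"
    using indF_nonbullet[of "ts ! j" r 0 "[j]" V] w w0 jr by auto
  then have "x \<in># restr ts V" using jr by (auto simp: mem_restr)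
  then show ?thesis using x by blast
qed

lemma deltaR_restr:
  assumes adm: "admissible ts V"
  shows "(deltaR (restr ts V) :: 'a::comm_ring_1) = (if V \<in> Pow (leaves ts) - {{}} then 1 else 0)"
proof (cases "V = {}")
  case True then show ?thesis by (simp add: restr_emptyset delta_def eps_def)
next
  case False
  have "eps (restr ts V) = 0"
    using restr_nonempty[OF _ False] adm by (simp add: eps_def admissible_def)
  moreover have "delta (restr ts V) = (if V \<subseteq> leaves ts then 1 else 0 :: 'a)"
    using restr_leaves_bullets[of V ts] restr_inner_vertex[OF adm]
    by (auto intro: delta_bullets delta_nonbullet)
  ultimately show ?thesis using False by simp
qed

lemma conv_deltaR:
  "conv deltaR g F = (\<Sum>V\<in>Pow (leaves (rep F)) - {{}}. g (restr (rep F) (fpos (rep F) - V)))"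
proof -
  let ?ts = "rep F"
  have fin: "finite {V. admissible ?ts V}"
    by (rule finite_subset[of _ "Pow (fpos ?ts)"]) (auto simp: admissible_def finite_fpos)
  have "conv deltaR g F = (\<Sum>V\<in>{V. admissible ?ts V}. deltaR (restr ?ts V) * g (restr ?ts (fpos ?ts - V)))"
    by (simp add: conv_def Let_def)
  also have "\<dots> = (\<Sum>V\<in>Pow (leaves ?ts) - {{}}. g (restr ?ts (fpos ?ts - V)))"
    by (rule sum.mono_neutral_cong_right[OF fin]) (auto simp: deltaR_restr admissible_leaves)
  finally show ?thesis .
qed

section \<open>Removing leaves and decreasing labellings\<close>

lemma sum_Pow_Un:
  assumes "P \<inter> Q = {}"
  shows "(\<Sum>V\<in>Pow (P \<union> Q). f V) = (\<Sum>X\<in>Pow P. \<Sum>Y\<in>Pow Q. f (X \<union> Y))"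
proof -
  have bij: "bij_betw (\<lambda>(X, Y). X \<union> Y) (Pow P \<times> Pow Q) (Pow (P \<union> Q))"
    by (rule bij_betw_byWitness[where f'="\<lambda>V. (V \<inter> P, V \<inter> Q)"]) (use assms in auto)
  have "(\<Sum>X\<in>Pow P. \<Sum>Y\<in>Pow Q. f (X \<union> Y)) = (\<Sum>(X, Y)\<in>Pow P \<times> Pow Q. f (X \<union> Y))"
    by (rule sum.cartesian_product)
  also have "\<dots> = (\<Sum>V\<in>Pow (P \<union> Q). f V)"
    using sum.reindex_bij_betw[OF bij, of f] by (simp add: case_prod_beta')
  finally show ?thesis by simp
qed

lemma sum_Pow_image: "inj_on g P \<Longrightarrow> (\<Sum>V\<in>Pow (g ` P). f V) = (\<Sum>X\<in>Pow P. f (g ` X))"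
  by (simp add: image_Pow_surj[symmetric] sum.reindex inj_on_image_Pow)

lemma leaf_removal_forest:
  assumes "\<And>c m. c \<in> set cs \<Longrightarrow>
     (\<Sum>W\<in>Pow (leavesT c). declabF (indF [] (posT c - W) c) m) = (declab (np c) (Suc m) :: 'a::comm_ring_1)"
  shows "(\<Sum>V\<in>Pow (leaves cs). declabF (restr cs (fpos cs - V)) m) = (declabF (mset (map np cs)) (Suc m) :: 'a)"
  using assms
proof (induction cs arbitrary: m)
  case Nil
  have "leaves [] = {}" by (auto simp: leaves_def leavesT_def ppos_leaf)
  then show ?case by (simp add: restr_unfold declabF_empty)
next
  case (Cons c cs)
  have "inj_on shift (leaves cs)" using inj_shift by (simp add: inj_on_def inj_def)
  then have "(\<Sum>V\<in>Pow (leaves (c # cs)). declabF (restr (c # cs) (fpos (c # cs) - V)) m :: 'a) =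
    (\<Sum>X\<in>Pow (leavesT c). \<Sum>Y\<in>Pow (leaves cs).
       declabF (restr (c # cs) (fpos (c # cs) - ((Cons 0) ` X \<union> shift ` Y))) m)"
    unfolding leaves_Cons sum_Pow_Un[OF leaves_Cons_disjoint] by (simp add: sum_Pow_image inj_on_def)
  also have "\<dots> = (\<Sum>X\<in>Pow (leavesT c). declabF (indF [] (posT c - X) c) m)
                 * (\<Sum>Y\<in>Pow (leaves cs). declabF (restr cs (fpos cs - Y)) m)"
    by (simp add: restr_Cons_cut declabF_plus sum_product)
  also have "\<dots> = declabF (mset (map np (c # cs))) (Suc m)"
    using Cons by (simp add: declabF_def)
  finally show ?case .
qed

text \<open>The leaf-removal identity for a single tree, by induction on the tree: either the root
  itself is the only vertex, or the root survives and the sum runs over its subtrees.\<close>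
lemma leaf_removal_tree:
  "(\<Sum>W\<in>Pow (leavesT t). declabF (indF [] (posT t - W) t) m) = (declab (np t) (Suc m) :: 'a::comm_ring_1)"
proof (induction t arbitrary: m)
  case (PNode cs)
  show ?case
  proof (cases "cs = []")
    case True
    have "leavesT (PNode []) = {[]}" "posT (PNode []) = {[]}" "Pow {[]::nat list} = {{}, {[]}}"
      by (auto simp: leavesT_def posT_def ppos_leaf)
    moreover have "indF [] {[]} (PNode []) = {#Node {#}#}" "indF [] {} (PNode []) = {#}"
      by (simp_all add: indF_PNode ind_att_def ind_loose_def)
    ultimately show ?thesis using True by (simp add: declabF_single declabF_empty)
  next
    case False
    have lv: "leavesT (PNode cs) = leaves cs" using False by (cases cs) (auto simp: leaves_def leavesT_def)
    have "(\<Sum>W\<in>Pow (leavesT (PNode cs)). declabF (indF [] (posT (PNode cs) - W) (PNode cs)) m :: 'a)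
        = (\<Sum>W\<in>Pow (leaves cs). \<Sum>r<m. declabF (restr cs (fpos cs - W)) r)"
      unfolding lv by (intro sum.cong refl) (simp add: indF_cut_leaves declabF_single declabF_def)
    also have "\<dots> = (\<Sum>r<m. declabF (mset (map np cs)) (Suc r))"
      by (subst sum.swap) (intro sum.cong refl leaf_removal_forest PNode.IH)
    also have "\<dots> = declab (np (PNode cs)) (Suc m)"
    proof -
      have nonempty: "mset (map np cs) \<noteq> {#}" using False by simp
      show ?thesis
        by (simp only: np.simps declab_Node sum.lessThan_Suc_shift declabF_0[OF nonempty] add_0)
    qed
    finally show ?thesis .
  qed
qed

text \<open>Step (2): the binomial transform of k \<mapsto> (delta - eps)^{*k}(F) counts decreasing
  labellings, i.e. it is delta^{*m}(F).\<close>
lemma btrans_cpow: "btrans (\<lambda>k. cpow deltaR k F) m = (declabF F m :: 'a::comm_ring_1)"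
proof (induction m arbitrary: F)
  case 0
  show ?case by (cases "F = {#}") (simp_all add: btrans_0 eps_def declabF_empty declabF_0)
next
  case (Suc m)
  let ?ts = "rep F"
  let ?R = "\<lambda>V. restr ?ts (fpos ?ts - V)"
  have "(btrans (\<lambda>k. cpow deltaR k F) (Suc m) :: 'a)
      = btrans (\<lambda>k. cpow deltaR k (?R {})) m + (\<Sum>V\<in>Pow (leaves ?ts) - {{}}. btrans (\<lambda>k. cpow deltaR k (?R V)) m)"
    by (simp add: btrans_Suc conv_deltaR btrans_sum finite_leaves restr_full rep_mset del: mset_map)
  also have "\<dots> = (\<Sum>V\<in>Pow (leaves ?ts). declabF (?R V) m)"
    by (subst sum.remove[of _ "{}"]) (auto simp: finite_leaves Suc.IH)
  also have "\<dots> = declabF F (Suc m)"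
    by (simp only: leaf_removal_forest[OF leaf_removal_tree] rep_mset)
  finally show ?case .
qed

lemma coeff_Lambda: "coeff (Lambda t :: 'a::comm_ring_1 poly) k = cpow deltaR k {#t#}"
proof (rule btrans_inj)
  fix m
  have "btrans (coeff (Lambda t :: 'a poly)) m = declab t m"
    using beval_lamp[of "SOME p. np p = t"] by (simp add: beval_def Lambda_def np_some)
  also have "\<dots> = btrans (\<lambda>k. cpow deltaR k {#t#}) m"
    by (simp add: btrans_cpow declabF_single)
  finally show "btrans (coeff (Lambda t :: 'a poly)) m = btrans (\<lambda>k. cpow deltaR k {#t#}) m" .
qed

theorem mainTheorem17:
  fixes t :: tree
  shows "(omega {#t#} :: 'k::field_char_0) =
    (\<Sum>s\<in>{1..degree (Lambda t :: 'k poly)}. (-1) ^ (s + 1) / of_nat s * coeff (Lambda t :: 'k poly) s)"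
proof -
  let ?L = "Lambda t :: 'k poly"
  have term_eq: "omega_term n {#t#} = ((-1) ^ (n + 1) / of_nat n * coeff ?L n :: 'k)" for n
    by (simp add: omega_term_def coeff_Lambda)
  have "{n. 1 \<le> n \<and> omega_term n {#t#} \<noteq> (0::'k)} \<subseteq> {1..degree ?L}"
    by (auto simp: term_eq intro: le_degree)
  then have "(omega {#t#} :: 'k) = (\<Sum>n\<in>{1..degree ?L}. omega_term n {#t#})"
    unfolding omega_def by (intro sum.mono_neutral_left) auto
  then show ?thesis by (simp add: term_eq)
qed

end
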